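(* Let $N$ be a binary network that contains a crown, i.e. there are an integer $k\ge 2$ and distinct nodes $u_1,\dots,u_k,v_1,\dots,v_k$ of $N$ such that $(u_i,v_i)$ and $(u_i,v_{i+1})$ are arcs of $N$ for all $i\in\{1,\dots,k\}$ (indices taken modulo $k$). Then $N$ does not admit an HGT-consistent labelling. In particular, there exist binary tree-based networks (for instance, the network on taxa $\{a,b\}$ consisting of a root, its child $w$, two children $u_1,u_2$ of $w$, reticulations $v_1,v_2$ each with parents $u_1,u_2$, and leaves $a,b$ as children of $v_1,v_2$ respectively) that admit no HGT-consistent labelling.
   Context: A (directed phylogenetic) network on a finite taxa set $X$ is a directed acyclic graph without parallel arcs whose nodes are of the following types: a unique root (indegree 0, outdegree 1); tree nodes (indegree 1, outdegree at least 2); reticulations (indegree at least 2, outdegree 1); leaves (indegree 1, outdegree 0), the leaves being bijectively labelled by $X$. Non-leaf nodes are called internal. A network is binary if every tree node and every reticulation has total degree (indegree plus outdegree) exactly 3. HGT-consistent labelling: Let $N$ be a binary network with node set $V$. An HGT-consistent labelling of $N$ is a map $t:V\to\mathbb{R}$ such that (1) for every arc $(u,v)$, $t(u)\le t(v)$, and equality is allowed only if $v$ is a reticulation; (2) every internal node $u$ has a child $v$ with $t(u)<t(v)$; (3) for every reticulation $r$ with parents $u$ and $v$, exactly one of $t(u)=t(r)$ and $t(v)=t(r)$ holds. Tree-based: A binary network $N$ is tree-based with base tree $T$ (a binary tree on the same taxa) if $N$ can be obtained from $T$ by: (i) replacing some arcs of $T$ by directed paths whose internal nodes (attachment points) have indegree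 1 and outdegree 1; (ii) adding arcs (linking arcs) between attachment points so that no node has total degree greater than 3 and the graph stays acyclic; (iii) suppressing all attachment points not incident to a linking arc. *)

theory Defs
  imports Complex_Main
begin

(* A directed graph is given by a node set V and an arc set A (a set, so no
   parallel arcs).  Leaves are labelled by a map lab from the taxa set X. *)

definition indeg :: "('v \<times> 'v) set \<Rightarrow> 'v \<Rightarrow> nat" where
  "indeg A v = card {u. (u, v) \<in> A}"

definition outdeg :: "('v \<times> 'v) set \<Rightarrow> 'v \<Rightarrow> nat" where
  "outdeg A v = card {w. (v, w) \<in> A}"

definition is_root :: "('v \<times> 'v) set \<Rightarrow> 'v \<Rightarrow> bool" where
  "is_root A v \<longleftrightarrow> indeg A v = 0 \<and> outdeg A v = 1"

definition is_tree_node :: "('v \<times> 'v) set \<Rightarrow> 'v \<Rightarrow> bool" where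
  "is_tree_node A v \<longleftrightarrow> indeg A v = 1 \<and> outdeg A v \<ge> 2"

definition is_reticulation :: "('v \<times> 'v) set \<Rightarrow> 'v \<Rightarrow> bool" where
  "is_reticulation A v \<longleftrightarrow> indeg A v \<ge> 2 \<and> outdeg A v = 1"

definition is_leaf :: "('v \<times> 'v) set \<Rightarrow> 'v \<Rightarrow> bool" where
  "is_leaf A v \<longleftrightarrow> indeg A v = 1 \<and> outdeg A v = 0"

definition is_internal :: "('v \<times> 'v) set \<Rightarrow> 'v \<Rightarrow> bool" where
  "is_internal A v \<longleftrightarrow> \<not> is_leaf A v"

definition network :: "'v set \<Rightarrow> ('v \<times> 'v) set \<Rightarrow> 'x set \<Rightarrow> ('x \<Rightarrow> 'v) \<Rightarrow> bool" where
  "network V A X lab \<longleftrightarrow>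
     finite V \<and> finite X \<and> A \<subseteq> V \<times> V \<and> acyclic A \<and>
     (\<exists>!r. r \<in> V \<and> is_root A r) \<and>
     (\<forall>v\<in>V. is_root A v \<or> is_tree_node A v \<or> is_reticulation A v \<or> is_leaf A v) \<and>
     bij_betw lab X {v \<in> V. is_leaf A v}"

definition binary_network :: "'v set \<Rightarrow> ('v \<times> 'v) set \<Rightarrow> 'x set \<Rightarrow> ('x \<Rightarrow> 'v) \<Rightarrow> bool" where
  "binary_network V A X lab \<longleftrightarrow> network V A X lab \<and>
     (\<forall>v\<in>V. (is_tree_node A v \<or> is_reticulation A v) \<longrightarrow> indeg A v + outdeg A v = 3)"

definition hgt_consistent :: "'v set \<Rightarrow> ('v \<times> 'v) set \<Rightarrow> ('v \<Rightarrow> real) \<Rightarrow> bool" where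
  "hgt_consistent V A t \<longleftrightarrow>
     (\<forall>(u, v)\<in>A. t u \<le> t v \<and> (t u = t v \<longrightarrow> is_reticulation A v)) \<and>
     (\<forall>u\<in>V. is_internal A u \<longrightarrow> (\<exists>v. (u, v) \<in> A \<and> t u < t v)) \<and>
     (\<forall>r\<in>V. is_reticulation A r \<longrightarrow>
        (\<forall>u w. (u, r) \<in> A \<and> (w, r) \<in> A \<and> u \<noteq> w \<longrightarrow> ((t u = t r) \<noteq> (t w = t r))))"

definition has_crown :: "'v set \<Rightarrow> ('v \<times> 'v) set \<Rightarrow> bool" where
  "has_crown V A \<longleftrightarrow> (\<exists>k::nat. \<exists>u v :: nat \<Rightarrow> 'v. k \<ge> 2 \<and>
     inj_on u {..<k} \<and> inj_on v {..<k} \<and> u ` {..<k} \<inter> v ` {..<k} = {} \<and>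
     u ` {..<k} \<subseteq> V \<and> v ` {..<k} \<subseteq> V \<and>
     (\<forall>i<k. (u i, v i) \<in> A \<and> (u i, v (Suc i mod k)) \<in> A))"

definition path_arcs :: "'v list \<Rightarrow> ('v \<times> 'v) set" where
  "path_arcs p = set (zip p (tl p))"

(* Tree-based with base tree T = (VT, AT).  Up to isomorphism, the nodes of T
   are identified with the nodes of N they remain; the other nodes of N are the
   (non-suppressed) attachment points P = V - VT.  Each arc (x,y) of T is
   replaced by the path x # sub (x,y) @ [y] through attachment points; these
   subdivision paths are internally disjoint and their arcs are exactly the
   non-linking arcs; linking arcs L join attachment points; every remaining
   attachment point is incident to a linking arc.  Degree bound and
   acyclicity follow from N being a binary network. *)
definition tree_based_with :: "'v set \<Rightarrow> ('v \<times> 'v) set \<Rightarrow> 'x set \<Rightarrow> ('x \<Rightarrow> 'v)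
     \<Rightarrow> 'v set \<Rightarrow> ('v \<times> 'v) set \<Rightarrow> bool" where
  "tree_based_with V A X lab VT AT \<longleftrightarrow>
     binary_network VT AT X lab \<and> (\<forall>v\<in>VT. \<not> is_reticulation AT v) \<and> VT \<subseteq> V \<and>
     (\<exists>L sub. L \<subseteq> A \<and> L \<subseteq> (V - VT) \<times> (V - VT) \<and>
        (\<forall>p\<in>V - VT. \<exists>q. (p, q) \<in> L \<or> (q, p) \<in> L) \<and>
        (\<forall>e\<in>AT. distinct (sub e) \<and> set (sub e) \<subseteq> V - VT) \<and>
        (\<forall>e\<in>AT. \<forall>e'\<in>AT. e \<noteq> e' \<longrightarrow> set (sub e) \<inter> set (sub e') = {}) \<and>
        (\<Union>e\<in>AT. set (sub e)) = V - VT \<and>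
        A - L = (\<Union>(x, y)\<in>AT. path_arcs (x # sub (x, y) @ [y])))"

definition tree_based :: "'v set \<Rightarrow> ('v \<times> 'v) set \<Rightarrow> 'x set \<Rightarrow> ('x \<Rightarrow> 'v) \<Rightarrow> bool" where
  "tree_based V A X lab \<longleftrightarrow> binary_network V A X lab \<and> (\<exists>VT AT. tree_based_with V A X lab VT AT)"

(* The example: root 0, w = 1, u1 = 2, u2 = 3, v1 = 4, v2 = 5, leaves a = 6, b = 7;
   taxa a = 0, b = 1. *)
definition ex_V :: "nat set" where "ex_V = {0..7}"
definition ex_A :: "(nat \<times> nat) set" where
  "ex_A = {(0,1), (1,2), (1,3), (2,4), (3,4), (2,5), (3,5), (4,6), (5,7)}"
definition ex_X :: "nat set" where "ex_X = {0, 1}"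
definition ex_lab :: "nat \<Rightarrow> nat" where "ex_lab x = (if x = 0 then 6 else 7)"

end

theory Submission
  imports Defs
begin

text \<open>Let \<open>u\<^sub>m\<close> be a node of the crown with the largest time. Each of its two children
  \<open>v\<^sub>m\<close>, \<open>v\<^sub>m\<^sub>+\<^sub>1\<close> is a reticulation whose time equals that of one of its parents; both
  parents are crown nodes, hence no later than \<open>u\<^sub>m\<close>, while the child is no earlier than
  \<open>u\<^sub>m\<close>. So both children of \<open>u\<^sub>m\<close> carry the time of \<open>u\<^sub>m\<close>, contradicting that every
  internal node has a strictly later child.\<close>

lemma cyclic_max_has_equal_children:
  fixes a b :: "nat \<Rightarrow> 'a::linorder"
  assumes "0 < k"
    and le: "\<forall>i<k. a i \<le> b i \<and> a i \<le> b (Suc i mod k)"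
    and eq: "\<forall>i<k. b (Suc i mod k) = a i \<or> b (Suc i mod k) = a (Suc i mod k)"
  shows "\<exists>i<k. b i = a i \<and> b (Suc i mod k) = a i"
proof -
  have "Max (a ` {..<k}) \<in> a ` {..<k}"
    using \<open>0 < k\<close> by (intro Max_in) auto
  then obtain m where m: "m < k" and "a m = Max (a ` {..<k})"
    by auto
  then have max: "\<And>i. i < k \<Longrightarrow> a i \<le> a m"
    by simp
  have child: "b (Suc i mod k) = a m" if i: "i < k" and im: "i = m \<or> Suc i mod k = m" for i
  proof -
    have q: "Suc i mod k < k"
      using \<open>0 < k\<close> by simp
    have "b (Suc i mod k) \<le> a m"
      using eq max i q by (metis order_refl)
    moreover have "a m \<le> b (Suc i mod k)"
      using le i q im by metis
    ultimately show ?thesis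
      by (rule order_antisym)
  qed
  define p where "p = (if m = 0 then k - 1 else m - 1)"
  have p: "p < k" "Suc p mod k = m"
    using m \<open>0 < k\<close> by (auto simp: p_def)
  have "b m = a m"
    using child[OF p(1)] p(2) by simp
  moreover have "b (Suc m mod k) = a m"
    using child m by blast
  ultimately show ?thesis
    using m by blast
qed

lemma network_finite_arcs:
  assumes "network V A X lab"
  shows "finite A"
  using assms finite_subset[of A "V \<times> V"] unfolding network_def by auto

lemma finite_children: "finite A \<Longrightarrow> finite {w. (u, w) \<in> A}"
  by (rule finite_subset[of _ "snd ` A"]) (auto intro: rev_image_eqI)

lemma finite_parents: "finite A \<Longrightarrow> finite {w. (w, v) \<in> A}"
  by (rule finite_subset[of _ "fst ` A"]) (auto intro: rev_image_eqI)

lemma network_node_cases: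
  "network V A X lab \<Longrightarrow> v \<in> V \<Longrightarrow>
    is_root A v \<or> is_tree_node A v \<or> is_reticulation A v \<or> is_leaf A v"
  unfolding network_def by blast

lemma binary_network_children_eq:
  assumes bn: "binary_network V A X lab" and "u \<in> V"
    and "(u, x) \<in> A" "(u, y) \<in> A" "x \<noteq> y"
  shows "{w. (u, w) \<in> A} = {x, y}"
proof -
  have net: "network V A X lab"
    using bn unfolding binary_network_def by simp
  have fin: "finite {w. (u, w) \<in> A}"
    using finite_children network_finite_arcs[OF net] .
  have sub: "{x, y} \<subseteq> {w. (u, w) \<in> A}"
    using assms by auto
  have "card {x, y} = 2"
    using \<open>x \<noteq> y\<close> by simp
  then have "outdeg A u \<ge> 2"
    using card_mono[OF fin sub] unfolding outdeg_def by simp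
  then have "is_tree_node A u"
    using network_node_cases[OF net \<open>u \<in> V\<close>]
    unfolding is_root_def is_reticulation_def is_leaf_def by auto
  then have "outdeg A u = card {x, y}"
    using bn \<open>u \<in> V\<close> \<open>card {x, y} = 2\<close>
    unfolding binary_network_def is_tree_node_def by auto
  then show ?thesis
    using card_subset_eq[OF fin sub] unfolding outdeg_def by simp
qed

lemma network_two_parents_reticulation:
  assumes net: "network V A X lab" and "v \<in> V"
    and "(x, v) \<in> A" "(y, v) \<in> A" "x \<noteq> y"
  shows "is_reticulation A v"
proof -
  have fin: "finite {w. (w, v) \<in> A}"
    using finite_parents network_finite_arcs[OF net] .
  have sub: "{x, y} \<subseteq> {w. (w, v) \<in> A}"
    using assms by auto
  have "card {x, y} = 2"
    using \<open>x \<noteq> y\<close> by simp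
  then have "indeg A v \<ge> 2"
    using card_mono[OF fin sub] unfolding indeg_def by simp
  then show ?thesis
    using network_node_cases[OF net \<open>v \<in> V\<close>]
    unfolding is_root_def is_tree_node_def is_leaf_def by auto
qed

lemma hgt_consistent_arc_le:
  "hgt_consistent V A t \<Longrightarrow> (u, v) \<in> A \<Longrightarrow> t u \<le> t v"
  unfolding hgt_consistent_def by blast

lemma hgt_consistent_reticulation_eq_parent:
  assumes "hgt_consistent V A t" "r \<in> V" "is_reticulation A r"
    and "(x, r) \<in> A" "(y, r) \<in> A" "x \<noteq> y"
  shows "t r = t x \<or> t r = t y"
proof -
  have "(t x = t r) \<noteq> (t y = t r)"
    using assms unfolding hgt_consistent_def by blast
  then show ?thesis
    by auto
qed

lemma hgt_consistent_later_child:
  assumes hgt: "hgt_consistent V A t" and "u \<in> V" and children: "{w. (u, w) \<in> A} = {x, y}"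
  shows "t u < t x \<or> t u < t y"
proof -
  have "is_internal A u"
    using children unfolding is_internal_def is_leaf_def outdeg_def by auto
  then obtain w where "w \<in> {w. (u, w) \<in> A}" "t u < t w"
    using hgt \<open>u \<in> V\<close> unfolding hgt_consistent_def by blast
  then show ?thesis
    unfolding children by blast
qed

lemma crown_not_hgt_consistent:
  assumes bn: "binary_network V A X lab" and "has_crown V A"
  shows "\<not> hgt_consistent V A t"
proof
  assume hgt: "hgt_consistent V A t"
  have net: "network V A X lab"
    using bn unfolding binary_network_def by simp
  obtain k u v where k: "k \<ge> 2" and inj: "inj_on u {..<k}" "inj_on v {..<k}"
    and uV: "u ` {..<k} \<subseteq> V" and vV: "v ` {..<k} \<subseteq> V"
    and arcs: "\<forall>i<k. (u i, v i) \<in> A \<and> (u i, v (Suc i mod k)) \<in> A"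
    using \<open>has_crown V A\<close> unfolding has_crown_def by metis
  let ?s = "\<lambda>i. Suc i mod k"
  have s: "?s i < k" "?s i \<noteq> i" if "i < k" for i
    using k that by (auto simp: mod_if)
  have u_ne: "u i \<noteq> u (?s i)" and v_ne: "v i \<noteq> v (?s i)" if "i < k" for i
    using inj_onD[OF inj(1)] inj_onD[OF inj(2)] s[OF that] that by auto
  have children: "{w. (u i, w) \<in> A} = {v i, v (?s i)}" if "i < k" for i
  proof (rule binary_network_children_eq[OF bn])
    show "u i \<in> V"
      using uV that by auto
    show "(u i, v i) \<in> A" "(u i, v (?s i)) \<in> A"
      using arcs that by auto
  qed (rule v_ne[OF that])
  have "\<exists>i<k. t (v i) = t (u i) \<and> t (v (?s i)) = t (u i)"
  proof (rule cyclic_max_has_equal_children)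
    show "0 < k"
      using k by simp
    show "\<forall>i<k. t (u i) \<le> t (v i) \<and> t (u i) \<le> t (v (?s i))"
      using arcs hgt_consistent_arc_le[OF hgt] by simp
    show "\<forall>i<k. t (v (?s i)) = t (u i) \<or> t (v (?s i)) = t (u (?s i))"
    proof (intro allI impI)
      fix i assume "i < k"
      have parents: "(u i, v (?s i)) \<in> A" "(u (?s i), v (?s i)) \<in> A"
        using arcs s(1)[OF \<open>i < k\<close>] \<open>i < k\<close> by auto
      have "v (?s i) \<in> V"
        using vV s(1)[OF \<open>i < k\<close>] by auto
      with parents show "t (v (?s i)) = t (u i) \<or> t (v (?s i)) = t (u (?s i))"
        using hgt_consistent_reticulation_eq_parent[OF hgt]
          network_two_parents_reticulation[OF net] u_ne[OF \<open>i < k\<close>] by blast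
    qed
  qed
  then obtain i where i: "i < k" and "t (v i) = t (u i)" "t (v (?s i)) = t (u i)"
    by blast
  moreover have "t (u i) < t (v i) \<or> t (u i) < t (v (?s i))"
    using hgt_consistent_later_child[OF hgt _ children[OF i]] uV i by auto
  ultimately show False
    by simp
qed

lemma acyclic_if_increasing: "r \<subseteq> {(x::nat, y). x < y} \<Longrightarrow> acyclic r"
proof -
  assume r: "r \<subseteq> {(x::nat, y). x < y}"
  have "(x, y) \<in> r\<^sup>+ \<Longrightarrow> x < y" for x y
    by (induction rule: trancl_induct) (use r in auto)
  then show ?thesis
    unfolding acyclic_def by blast
qed

lemma ex_V_iff: "n \<in> ex_V \<longleftrightarrow> n = 0 \<or> n = 1 \<or> n = 2 \<or> n = 3 \<or> n = 4 \<or> n = 5 \<or> n = 6 \<or> n = 7"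
  unfolding ex_V_def by auto

lemma indeg_ex_A:
  "indeg ex_A n = (if n = 0 then 0 else if n = 4 \<or> n = 5 then 2 else if n \<le> 7 then 1 else 0)"
proof -
  have "{u. (u, n) \<in> ex_A} = (if n = 1 then {0} else if n = 2 \<or> n = 3 then {1}
      else if n = 4 \<or> n = 5 then {2,3} else if n = 6 then {4} else if n = 7 then {5} else {})"
    unfolding ex_A_def by auto
  then show ?thesis
    unfolding indeg_def by auto
qed

lemma outdeg_ex_A:
  "outdeg ex_A n = (if n = 0 then 1 else if n \<le> 3 then 2 else if n \<le> 5 then 1 else 0)"
proof -
  have "{w. (n, w) \<in> ex_A} = (if n = 0 then {1} else if n = 1 then {2,3}
      else if n = 2 \<or> n = 3 then {4,5} else if n = 4 then {6} else if n = 5 then {7} else {})"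
    unfolding ex_A_def by auto
  then show ?thesis
    unfolding outdeg_def by auto
qed

lemma binary_network_ex: "binary_network ex_V ex_A ex_X ex_lab"
  unfolding binary_network_def network_def
proof (intro conjI)
  show "finite ex_V" "finite ex_X"
    unfolding ex_V_def ex_X_def by simp_all
  show "ex_A \<subseteq> ex_V \<times> ex_V"
    unfolding ex_A_def ex_V_def by auto
  show "acyclic ex_A"
    by (rule acyclic_if_increasing) (auto simp: ex_A_def)
  show "\<exists>!r. r \<in> ex_V \<and> is_root ex_A r"
    by (rule ex1I[of _ 0]) (auto simp: ex_V_iff is_root_def indeg_ex_A outdeg_ex_A)
  show "\<forall>v\<in>ex_V. is_root ex_A v \<or> is_tree_node ex_A v \<or> is_reticulation ex_A v \<or> is_leaf ex_A v"
    by (auto simp: ex_V_iff is_root_def is_tree_node_def is_reticulation_def is_leaf_def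
        indeg_ex_A outdeg_ex_A)
  have "{v \<in> ex_V. is_leaf ex_A v} = {6, 7}"
    unfolding is_leaf_def indeg_ex_A outdeg_ex_A ex_V_iff by auto
  then show "bij_betw ex_lab ex_X {v \<in> ex_V. is_leaf ex_A v}"
    unfolding bij_betw_def ex_X_def ex_lab_def inj_on_def by auto
  show "\<forall>v\<in>ex_V. (is_tree_node ex_A v \<or> is_reticulation ex_A v) \<longrightarrow>
      indeg ex_A v + outdeg ex_A v = 3"
    by (auto simp: ex_V_iff is_tree_node_def is_reticulation_def indeg_ex_A outdeg_ex_A)
qed

text \<open>The arc
  \<open>(1,6)\<close> is subdivided by \<open>u\<^sub>1 = 2\<close>, \<open>v\<^sub>1 = 4\<close>, the arc \<open>(1,7)\<close> by \<open>u\<^sub>2 = 3\<close>, \<open>v\<^sub>2 = 5\<close>,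
  and the linking arcs are \<open>(2,5)\<close> and \<open>(3,4)\<close>.\<close>

definition ex_VT :: "nat set" where "ex_VT = {0, 1, 6, 7}"
definition ex_AT :: "(nat \<times> nat) set" where "ex_AT = {(0,1), (1,6), (1,7)}"
definition ex_sub :: "nat \<times> nat \<Rightarrow> nat list" where
  "ex_sub e = (if e = (1,6) then [2,4] else if e = (1,7) then [3,5] else [])"
definition ex_L :: "(nat \<times> nat) set" where "ex_L = {(2,5), (3,4)}"

lemma ex_VT_iff: "n \<in> ex_VT \<longleftrightarrow> n = 0 \<or> n = 1 \<or> n = 6 \<or> n = 7"
  unfolding ex_VT_def by auto

lemma indeg_ex_AT: "indeg ex_AT n = (if n = 1 \<or> n = 6 \<or> n = 7 then 1 else 0)"
proof -
  have "{u. (u, n) \<in> ex_AT} = (if n = 1 then {0} else if n = 6 \<or> n = 7 then {1} else {})"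
    unfolding ex_AT_def by auto
  then show ?thesis
    unfolding indeg_def by auto
qed

lemma outdeg_ex_AT: "outdeg ex_AT n = (if n = 0 then 1 else if n = 1 then 2 else 0)"
proof -
  have "{w. (n, w) \<in> ex_AT} = (if n = 0 then {1} else if n = 1 then {6,7} else {})"
    unfolding ex_AT_def by auto
  then show ?thesis
    unfolding outdeg_def by auto
qed

lemma binary_network_ex_base_tree: "binary_network ex_VT ex_AT ex_X ex_lab"
  unfolding binary_network_def network_def
proof (intro conjI)
  show "finite ex_VT" "finite ex_X"
    unfolding ex_VT_def ex_X_def by simp_all
  show "ex_AT \<subseteq> ex_VT \<times> ex_VT"
    unfolding ex_AT_def ex_VT_def by auto
  show "acyclic ex_AT"
    by (rule acyclic_if_increasing) (auto simp: ex_AT_def)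
  show "\<exists>!r. r \<in> ex_VT \<and> is_root ex_AT r"
    by (rule ex1I[of _ 0]) (auto simp: ex_VT_iff is_root_def indeg_ex_AT outdeg_ex_AT)
  show "\<forall>v\<in>ex_VT. is_root ex_AT v \<or> is_tree_node ex_AT v \<or> is_reticulation ex_AT v \<or> is_leaf ex_AT v"
    by (auto simp: ex_VT_iff is_root_def is_tree_node_def is_reticulation_def is_leaf_def
        indeg_ex_AT outdeg_ex_AT)
  have "{v \<in> ex_VT. is_leaf ex_AT v} = {6, 7}"
    unfolding is_leaf_def indeg_ex_AT outdeg_ex_AT ex_VT_iff by auto
  then show "bij_betw ex_lab ex_X {v \<in> ex_VT. is_leaf ex_AT v}"
    unfolding bij_betw_def ex_X_def ex_lab_def inj_on_def by auto
  show "\<forall>v\<in>ex_VT. (is_tree_node ex_AT v \<or> is_reticulation ex_AT v) \<longrightarrow>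
      indeg ex_AT v + outdeg ex_AT v = 3"
    by (auto simp: ex_VT_iff is_tree_node_def is_reticulation_def indeg_ex_AT outdeg_ex_AT)
qed

lemma tree_based_ex: "tree_based ex_V ex_A ex_X ex_lab"
  unfolding tree_based_def
proof (intro conjI exI)
  show "binary_network ex_V ex_A ex_X ex_lab"
    by (rule binary_network_ex)
  have attachment_points: "ex_V - ex_VT = {2, 3, 4, 5}"
    unfolding ex_V_def ex_VT_def by auto
  show "tree_based_with ex_V ex_A ex_X ex_lab ex_VT ex_AT"
    unfolding tree_based_with_def attachment_points
  proof (intro conjI exI[of _ ex_L] exI[of _ ex_sub])
    show "binary_network ex_VT ex_AT ex_X ex_lab"
      by (rule binary_network_ex_base_tree)
    show "\<forall>v\<in>ex_VT. \<not> is_reticulation ex_AT v"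
      by (auto simp: ex_VT_iff is_reticulation_def indeg_ex_AT outdeg_ex_AT)
    show "ex_VT \<subseteq> ex_V"
      unfolding ex_VT_def ex_V_def by auto
    show "ex_A - ex_L = (\<Union>(x, y)\<in>ex_AT. path_arcs (x # ex_sub (x, y) @ [y]))"
      unfolding ex_A_def ex_L_def ex_AT_def ex_sub_def path_arcs_def by auto
  qed (auto simp: ex_L_def ex_A_def ex_AT_def ex_sub_def)
qed

lemma has_crown_ex: "has_crown ex_V ex_A"
  unfolding has_crown_def
proof (intro exI conjI)
  let ?u = "\<lambda>i::nat. if i = 0 then 2 else 3::nat"
  let ?v = "\<lambda>i::nat. if i = 0 then 4 else 5::nat"
  have two: "{..<2::nat} = {0, 1}"
    by auto
  show "inj_on ?u {..<2}" "inj_on ?v {..<2}" "?u ` {..<2} \<inter> ?v ` {..<2} = {}"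
    "?u ` {..<2} \<subseteq> ex_V" "?v ` {..<2} \<subseteq> ex_V"
    unfolding two by (auto simp: ex_V_def)
  show "\<forall>i<2. (?u i, ?v i) \<in> ex_A \<and> (?u i, ?v (Suc i mod 2)) \<in> ex_A"
    by (auto simp: ex_A_def less_2_cases_iff)
qed simp

theorem mainTheorem2:
  fixes V :: "'v set" and A :: "('v \<times> 'v) set" and X :: "'x set" and lab :: "'x \<Rightarrow> 'v"
  shows "(binary_network V A X lab \<and> has_crown V A \<longrightarrow> \<not> (\<exists>t. hgt_consistent V A t)) \<and>
         (tree_based ex_V ex_A ex_X ex_lab \<and> \<not> (\<exists>t. hgt_consistent ex_V ex_A t))"
  using crown_not_hgt_consistent crown_not_hgt_consistent[OF binary_network_ex has_crown_ex]
    tree_based_ex by blast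

end
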